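(* Let $P=\{S_1,\ldots,S_n\}$ be a homothetic packing of $n\ge 6$ squares whose radii satisfy the weak generic condition. Suppose that $(n_1,\ldots,n_k)$ is a cycle in the graph $([n],E_x)$ such that, setting $n_0=n_k$ and $n_{k+1}=n_1$, for every $i\in[k]$ neither $x_{n_{i-1}}<x_{n_i}<x_{n_{i+1}}$ nor $x_{n_{i+1}}<x_{n_i}<x_{n_{i-1}}$ holds. Then $k=4$ and the squares $S_{n_1},S_{n_2},S_{n_3},S_{n_4}$ share a corner.
   Context: Let $S=\{(x,y): -1\le x,y\le 1\}$. A homothetic packing of $n$ squares is a set $P=\{S_1,\ldots,S_n\}$ with $S_i=r_iS+p_i$, $r_i>0$ (radii), $p_i=(x_i,y_i)\in\mathbb{R}^2$ (centres), such that distinct squares have disjoint interiors. Its contact graph is $G=([n],E)$ where $\{i,j\}\in E$ iff $i\ne j$ and $S_i\cap S_j\ne\emptyset$; $E_x$ is the set of pairs $\{i,j\}\in E$ with $r_i+r_j=|x_i-x_j|\ge|y_i-y_j|$. The radii satisfy the weak generic condition if the only function $\sigma:[n]\to\{-1,0,1\}$ with at least $4$ zeroes and $\sum_{i=1}^n\sigma_ir_i=0$ is the zero function. Four squares share a corner if they have a common point which is a corner of each of them. *)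

theory Defs
  imports "HOL-Analysis.Analysis"
begin

text \<open>Squares are indexed by [n] = {1..n}. Square i has radius r i and centre (x i, y i).
  S = [-1,1]^2, so S_i = r_i S + p_i.\<close>

definition sq :: "(nat \<Rightarrow> real) \<Rightarrow> (nat \<Rightarrow> real) \<Rightarrow> (nat \<Rightarrow> real) \<Rightarrow> nat \<Rightarrow> (real \<times> real) set" where
  "sq r x y i = {p. \<bar>fst p - x i\<bar> \<le> r i \<and> \<bar>snd p - y i\<bar> \<le> r i}"

definition homothetic_packing :: "nat \<Rightarrow> (nat \<Rightarrow> real) \<Rightarrow> (nat \<Rightarrow> real) \<Rightarrow> (nat \<Rightarrow> real) \<Rightarrow> bool" where
  "homothetic_packing n r x y \<longleftrightarrow>
     (\<forall>i\<in>{1..n}. r i > 0) \<and>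
     (\<forall>i\<in>{1..n}. \<forall>j\<in>{1..n}. i \<noteq> j \<longrightarrow>
        interior (sq r x y i) \<inter> interior (sq r x y j) = {})"

definition contact_edge :: "nat \<Rightarrow> (nat \<Rightarrow> real) \<Rightarrow> (nat \<Rightarrow> real) \<Rightarrow> (nat \<Rightarrow> real) \<Rightarrow> nat \<Rightarrow> nat \<Rightarrow> bool" where
  "contact_edge n r x y i j \<longleftrightarrow> i \<in> {1..n} \<and> j \<in> {1..n} \<and> i \<noteq> j \<and>
     sq r x y i \<inter> sq r x y j \<noteq> {}"

definition x_edge :: "nat \<Rightarrow> (nat \<Rightarrow> real) \<Rightarrow> (nat \<Rightarrow> real) \<Rightarrow> (nat \<Rightarrow> real) \<Rightarrow> nat \<Rightarrow> nat \<Rightarrow> bool" where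
  "x_edge n r x y i j \<longleftrightarrow> contact_edge n r x y i j \<and>
     r i + r j = \<bar>x i - x j\<bar> \<and> \<bar>x i - x j\<bar> \<ge> \<bar>y i - y j\<bar>"

definition weak_generic :: "nat \<Rightarrow> (nat \<Rightarrow> real) \<Rightarrow> bool" where
  "weak_generic n r \<longleftrightarrow>
     (\<forall>\<sigma> :: nat \<Rightarrow> int.
        (\<forall>i\<in>{1..n}. \<sigma> i \<in> {-1, 0, 1}) \<and>
        card {i\<in>{1..n}. \<sigma> i = 0} \<ge> 4 \<and>
        (\<Sum>i=1..n. of_int (\<sigma> i) * r i) = 0
        \<longrightarrow> (\<forall>i\<in>{1..n}. \<sigma> i = 0))"

text \<open>A cycle (n_1,...,n_k), stored 0-indexed as a list c with c!0 = n_1, in the graph with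
  vertex set {1..n} and symmetric edge relation adj: k \<ge> 3 distinct vertices, consecutive ones
  (cyclically) adjacent.\<close>
definition is_cycle :: "nat \<Rightarrow> (nat \<Rightarrow> nat \<Rightarrow> bool) \<Rightarrow> nat list \<Rightarrow> bool" where
  "is_cycle n adj c \<longleftrightarrow> length c \<ge> 3 \<and> distinct c \<and> set c \<subseteq> {1..n} \<and>
     (\<forall>i < length c. adj (c ! i) (c ! ((i + 1) mod length c)))"

definition is_corner :: "(nat \<Rightarrow> real) \<Rightarrow> (nat \<Rightarrow> real) \<Rightarrow> (nat \<Rightarrow> real) \<Rightarrow> nat \<Rightarrow> real \<times> real \<Rightarrow> bool" where
  "is_corner r x y i p \<longleftrightarrow>
     (\<exists>s\<in>{-1, 1::real}. \<exists>t\<in>{-1, 1::real}. p = (x i + s * r i, y i + t * r i))"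

definition share_corner :: "(nat \<Rightarrow> real) \<Rightarrow> (nat \<Rightarrow> real) \<Rightarrow> (nat \<Rightarrow> real) \<Rightarrow> nat set \<Rightarrow> bool" where
  "share_corner r x y A \<longleftrightarrow> (\<exists>p. \<forall>i\<in>A. is_corner r x y i p)"

end

theory Submission
  imports Defs
begin

text \<open>
  Along an x-cycle consecutive squares touch along vertical sides, and since the centres never
  move monotonically through three consecutive squares, the horizontal direction alternates.
  Hence every square of the cycle touches one vertical line x = L, alternately from the left and
  from the right, and the cycle has even length. Squares touching the line from the same side
  have disjoint interiors, so their y-intervals are separated.

  Let square 3 of the cycle have the lowest top u. Its neighbours 2 and 4 lie on the other side
  and are separated, say 2 below 4; then the top of 2 and the bottom of 4 are both at height u,
  and so is the bottom of square 1, which meets 2 but is separated from 3. Thus squares 1, 2, 3, 4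
  share the corner (L, u). In a longer cycle, square 0 must sit on top of square 4 while meeting
  square 1, and square 5 on top of 1 while meeting 4, which forces r 1 = r 4 and contradicts
  the weak generic condition.
\<close>

lemma packing_aligned_edges_separated:
  assumes packing: "homothetic_packing n r x y"
    and i: "i \<in> {1..n}" and j: "j \<in> {1..n}" and "i \<noteq> j"
    and t: "t = 1 \<or> t = -1" and aligned: "x i + t * r i = x j + t * r j"
  shows "\<bar>y i - y j\<bar> \<ge> r i + r j"
proof (rule ccontr)
  assume "\<not> ?thesis"
  then have overlap: "\<bar>y i - y j\<bar> < r i + r j" by simp
  have pos: "r i > 0" "r j > 0" using packing i j unfolding homothetic_packing_def by auto
  have disjoint: "interior (sq r x y i) \<inter> interior (sq r x y j) = {}"
    using packing i j \<open>i \<noteq> j\<close> unfolding homothetic_packing_def by auto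
  have open_box: "{p. \<bar>fst p - x l\<bar> < r l \<and> \<bar>snd p - y l\<bar> < r l} \<subseteq> interior (sq r x y l)" for l
  proof (rule interior_maximal)
    show "{p. \<bar>fst p - x l\<bar> < r l \<and> \<bar>snd p - y l\<bar> < r l} \<subseteq> sq r x y l"
      unfolding sq_def by auto
  qed (intro open_Collect_conj open_Collect_less continuous_intros)
  define e where "e = min (r i) (r j) / 2"
  define h where "h = (max (y i - r i) (y j - r j) + min (y i + r i) (y j + r j)) / 2"
  have "\<bar>h - y i\<bar> < r i" "\<bar>h - y j\<bar> < r j"
    using overlap pos unfolding h_def max_def min_def abs_less_iff by (auto simp: field_simps)
  moreover have "\<bar>x i + t * (r i - e) - x i\<bar> < r i" "\<bar>x i + t * (r i - e) - x j\<bar> < r j"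
    using pos t aligned unfolding e_def by (auto simp: algebra_simps)
  ultimately have "(x i + t * (r i - e), h) \<in> interior (sq r x y i) \<inter> interior (sq r x y j)"
    using open_box[of i] open_box[of j] by auto
  with disjoint show False by auto
qed

lemma weak_generic_radii_distinct:
  assumes generic: "weak_generic n r" and "n \<ge> 6"
    and p: "p \<in> {1..n}" and q: "q \<in> {1..n}" and "p \<noteq> q"
  shows "r p \<noteq> r q"
proof
  assume eq: "r p = r q"
  define \<sigma> :: "nat \<Rightarrow> int" where "\<sigma> i = (if i = p then 1 else if i = q then -1 else 0)" for i
  have "\<forall>i\<in>{1..n}. \<sigma> i \<in> {-1, 0, 1}" unfolding \<sigma>_def by auto
  moreover have "{i\<in>{1..n}. \<sigma> i = 0} = {1..n} - {p, q}" unfolding \<sigma>_def by auto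
  then have "card {i\<in>{1..n}. \<sigma> i = 0} \<ge> 4"
    using p q \<open>p \<noteq> q\<close> \<open>n \<ge> 6\<close> by (simp add: card_Diff_subset)
  moreover have "(\<Sum>i=1..n. of_int (\<sigma> i) * r i) =
      (\<Sum>i=1..n. (if i = p then r i else 0) - (if i = q then r i else 0))"
    by (rule sum.cong) (auto simp: \<sigma>_def \<open>p \<noteq> q\<close>)
  then have "(\<Sum>i=1..n. of_int (\<sigma> i) * r i) = 0" using p q eq by (simp add: sum_subtractf)
  ultimately have "\<forall>i\<in>{1..n}. \<sigma> i = 0" using generic unfolding weak_generic_def by blast
  then show False using p unfolding \<sigma>_def by (metis one_neq_zero)
qed

lemma zigzag_steps_alternate:
  fixes a \<rho> :: "nat \<Rightarrow> real"
  assumes pos: "\<And>i. \<rho> i > 0"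
    and touch: "\<And>i. \<bar>a (Suc i) - a i\<bar> = \<rho> i + \<rho> (Suc i)"
    and zigzag: "\<And>i. \<not> (a i < a (Suc i) \<and> a (Suc i) < a (Suc (Suc i))) \<and>
                      \<not> (a (Suc (Suc i)) < a (Suc i) \<and> a (Suc i) < a i)"
  shows "a (Suc i) - a i = sgn (a 1 - a 0) * (-1) ^ i * (\<rho> i + \<rho> (Suc i))"
proof (induction i)
  case 0
  show ?case using sgn_mult_abs[of "a 1 - a 0"] touch[of 0] by simp
next
  case (Suc i)
  define e where "e = sgn (a 1 - a 0) * (-1) ^ i"
  have "sgn (a 1 - a 0) \<noteq> 0" using touch[of 0] pos[of 0] pos[of 1] by (auto simp: sgn_eq_0_iff)
  then have unit: "e = 1 \<or> e = -1" unfolding e_def by (auto simp: sgn_if minus_one_power_iff)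
  have "(a (Suc i) - a i) * (a (Suc (Suc i)) - a (Suc i)) < 0"
    using zigzag[of i] touch[of i] touch[of "Suc i"] pos[of i] pos[of "Suc i"] pos[of "Suc (Suc i)"]
    by (auto simp: mult_less_0_iff abs_if split: if_splits)
  then have "e * (a (Suc (Suc i)) - a (Suc i)) < 0"
    using Suc.IH pos[of i] pos[of "Suc i"] unfolding e_def[symmetric]
    by (auto simp: mult_less_0_iff zero_less_mult_iff)
  then have "a (Suc (Suc i)) - a (Suc i) = - e * (\<rho> (Suc i) + \<rho> (Suc (Suc i)))"
    using unit touch[of "Suc i"] by (auto simp: abs_if)
  then show ?case unfolding e_def by simp
qed

lemma zigzag_common_line:
  fixes a \<rho> :: "nat \<Rightarrow> real"
  assumes pos: "\<And>i. \<rho> i > 0"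
    and touch: "\<And>i. \<bar>a (Suc i) - a i\<bar> = \<rho> i + \<rho> (Suc i)"
    and zigzag: "\<And>i. \<not> (a i < a (Suc i) \<and> a (Suc i) < a (Suc (Suc i))) \<and>
                      \<not> (a (Suc (Suc i)) < a (Suc i) \<and> a (Suc i) < a i)"
  shows "a i + sgn (a 1 - a 0) * (-1) ^ i * \<rho> i = a 0 + sgn (a 1 - a 0) * \<rho> 0"
proof (induction i)
  case (Suc i)
  have "a (Suc i) - a i = sgn (a 1 - a 0) * (-1) ^ i * (\<rho> i + \<rho> (Suc i))"
    using zigzag_steps_alternate[of \<rho> a, OF pos touch zigzag] .
  with Suc.IH show ?case by (simp add: algebra_simps)
qed simp

lemma lowest_top_neighbours_meet:
  fixes b \<rho> :: "nat \<Rightarrow> real"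
  assumes pos: "\<And>j. \<rho> j > 0"
    and overlap: "\<And>j. \<bar>b j - b (j + 1)\<bar> \<le> \<rho> j + \<rho> (j + 1)"
    and separated: "\<And>j. \<bar>b j - b (j + 2)\<bar> \<ge> \<rho> j + \<rho> (j + 2)"
    and lowest: "\<And>j. b 3 + \<rho> 3 \<le> b j + \<rho> j"
  shows "b 2 + \<rho> 2 = b 3 + \<rho> 3 \<and> b 1 - \<rho> 1 = b 3 + \<rho> 3 \<and> b 4 - \<rho> 4 = b 3 + \<rho> 3 \<or>
         b 4 + \<rho> 4 = b 3 + \<rho> 3 \<and> b 5 - \<rho> 5 = b 3 + \<rho> 3 \<and> b 2 - \<rho> 2 = b 3 + \<rho> 3"
proof -
  have o12: "\<bar>b 1 - b 2\<bar> \<le> \<rho> 1 + \<rho> 2" and o23: "\<bar>b 2 - b 3\<bar> \<le> \<rho> 2 + \<rho> 3"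
    and o34: "\<bar>b 3 - b 4\<bar> \<le> \<rho> 3 + \<rho> 4" and o45: "\<bar>b 4 - b 5\<bar> \<le> \<rho> 4 + \<rho> 5"
    using overlap[of 1] overlap[of 2] overlap[of 3] overlap[of 4] by (simp_all add: numeral_eq_Suc)
  have s13: "\<bar>b 1 - b 3\<bar> \<ge> \<rho> 1 + \<rho> 3" and s35: "\<bar>b 3 - b 5\<bar> \<ge> \<rho> 3 + \<rho> 5"
    using separated[of 1] separated[of 3] by (simp_all add: numeral_eq_Suc)
  have "b 2 + \<rho> 2 \<le> b 4 - \<rho> 4 \<or> b 4 + \<rho> 4 \<le> b 2 - \<rho> 2"
    using separated[of 2] by auto
  then show ?thesis
  proof
    assume below: "b 2 + \<rho> 2 \<le> b 4 - \<rho> 4"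
    have top2: "b 2 + \<rho> 2 = b 3 + \<rho> 3" and "b 4 - \<rho> 4 = b 3 + \<rho> 3"
      using below o34 lowest[of 2] by linarith+
    moreover have "b 1 - \<rho> 1 = b 3 + \<rho> 3"
      using top2 o12 s13 pos[of 3] lowest[of 1] by linarith
    ultimately show ?thesis by blast
  next
    assume below: "b 4 + \<rho> 4 \<le> b 2 - \<rho> 2"
    have top4: "b 4 + \<rho> 4 = b 3 + \<rho> 3" and "b 2 - \<rho> 2 = b 3 + \<rho> 3"
      using below o23 lowest[of 4] by linarith+
    moreover have "b 5 - \<rho> 5 = b 3 + \<rho> 3"
      using top4 o45 s35 pos[of 3] lowest[of 5] by linarith
    ultimately show ?thesis by blast
  qed
qed

lemma lowest_top_corner:
  fixes b \<rho> :: "nat \<Rightarrow> real"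
  assumes "\<And>j. \<rho> j > 0"
    and "\<And>j. \<bar>b j - b (j + 1)\<bar> \<le> \<rho> j + \<rho> (j + 1)"
    and "\<And>j. \<bar>b j - b (j + 2)\<bar> \<ge> \<rho> j + \<rho> (j + 2)"
    and "\<And>j. b 3 + \<rho> 3 \<le> b j + \<rho> j"
  shows "\<exists>a\<in>{1, 2}. \<forall>j\<in>{a..a + 3}. b j + \<rho> j = b 3 + \<rho> 3 \<or> b j - \<rho> j = b 3 + \<rho> 3"
proof -
  have "{1..1 + 3} = {1, 2, 3, 4::nat}" "{2..2 + 3} = {2, 3, 4, 5::nat}" by auto
  with lowest_top_neighbours_meet[OF assms] show ?thesis by auto
qed

lemma lowest_top_equal_radii:
  fixes b \<rho> :: "nat \<Rightarrow> real"
  assumes pos: "\<And>j. \<rho> j > 0"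
    and overlap: "\<And>j. \<bar>b j - b (j + 1)\<bar> \<le> \<rho> j + \<rho> (j + 1)"
    and separated: "\<And>j. \<bar>b j - b (j + 2)\<bar> \<ge> \<rho> j + \<rho> (j + 2)"
    and separated4: "\<And>j. \<bar>b j - b (j + 4)\<bar> \<ge> \<rho> j + \<rho> (j + 4)"
    and lowest: "\<And>j. b 3 + \<rho> 3 \<le> b j + \<rho> j"
  shows "\<rho> 1 = \<rho> 4 \<or> \<rho> 2 = \<rho> 5"
proof -
  have o01: "\<bar>b 0 - b 1\<bar> \<le> \<rho> 0 + \<rho> 1" and o12: "\<bar>b 1 - b 2\<bar> \<le> \<rho> 1 + \<rho> 2"
    and o45: "\<bar>b 4 - b 5\<bar> \<le> \<rho> 4 + \<rho> 5" and o56: "\<bar>b 5 - b 6\<bar> \<le> \<rho> 5 + \<rho> 6"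
    using overlap[of 0] overlap[of 1] overlap[of 4] overlap[of 5] by (simp_all add: numeral_eq_Suc)
  have s02: "\<bar>b 0 - b 2\<bar> \<ge> \<rho> 0 + \<rho> 2" and s13: "\<bar>b 1 - b 3\<bar> \<ge> \<rho> 1 + \<rho> 3"
    and s35: "\<bar>b 3 - b 5\<bar> \<ge> \<rho> 3 + \<rho> 5" and s46: "\<bar>b 4 - b 6\<bar> \<ge> \<rho> 4 + \<rho> 6"
    using separated[of 0] separated[of 1] separated[of 3] separated[of 4]
    by (simp_all add: numeral_eq_Suc)
  have s04: "\<bar>b 0 - b 4\<bar> \<ge> \<rho> 0 + \<rho> 4" and s15: "\<bar>b 1 - b 5\<bar> \<ge> \<rho> 1 + \<rho> 5"
    and s26: "\<bar>b 2 - b 6\<bar> \<ge> \<rho> 2 + \<rho> 6"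
    using separated4[of 0] separated4[of 1] separated4[of 2] by (simp_all add: numeral_eq_Suc)
  from lowest_top_neighbours_meet[OF pos overlap separated lowest] show ?thesis
  proof (elim disjE conjE)
    assume "b 2 + \<rho> 2 = b 3 + \<rho> 3" "b 1 - \<rho> 1 = b 3 + \<rho> 3" "b 4 - \<rho> 4 = b 3 + \<rho> 3"
    moreover have "b 0 - \<rho> 0 \<ge> b 4 + \<rho> 4"
      using calculation s02 s04 pos[of 0] pos[of 2] lowest[of 0] by linarith
    moreover have "b 5 - \<rho> 5 \<ge> b 1 + \<rho> 1"
      using calculation s35 s15 pos[of 3] pos[of 5] lowest[of 5] by linarith
    ultimately have "\<rho> 1 = \<rho> 4" using o01 o45 by linarith
    then show ?thesis ..
  next
    assume "b 4 + \<rho> 4 = b 3 + \<rho> 3" "b 5 - \<rho> 5 = b 3 + \<rho> 3" "b 2 - \<rho> 2 = b 3 + \<rho> 3"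
    moreover have "b 6 - \<rho> 6 \<ge> b 2 + \<rho> 2"
      using calculation s46 s26 pos[of 4] pos[of 6] lowest[of 6] by linarith
    moreover have "b 1 - \<rho> 1 \<ge> b 5 + \<rho> 5"
      using calculation s13 s15 pos[of 1] pos[of 3] lowest[of 1] by linarith
    ultimately have "\<rho> 2 = \<rho> 5" using o12 o56 by linarith
    then show ?thesis ..
  qed
qed

lemma periodic_mod:
  fixes f :: "nat \<Rightarrow> 'a"
  assumes periodic: "\<And>i. f (i + k) = f i"
  shows "f (i mod k) = f i"
proof -
  have "f (j + m * k) = f j" for j m
    by (induction m) (simp_all, metis add.assoc add.commute periodic)
  then show ?thesis by (metis mod_div_mult_eq)
qed

lemma periodic_image_window:
  fixes f :: "nat \<Rightarrow> 'a"
  assumes periodic: "\<And>i. f (i + k) = f i" and "k > 0"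
  shows "f ` {a..<a + k} = f ` {..<k}"
proof (induction a)
  case (Suc a)
  have "{Suc a..<Suc a + k} = insert (a + k) ({a..<a + k} - {a})" using \<open>k > 0\<close> by auto
  then have "f ` {Suc a..<Suc a + k} = insert (f a) (f ` ({a..<a + k} - {a}))"
    by (simp add: periodic)
  also have "\<dots> = f ` {a..<a + k}" using \<open>k > 0\<close> by auto
  finally show ?case using Suc.IH by simp
qed (simp add: lessThan_atLeast0)

lemma periodic_has_minimum:
  fixes h :: "nat \<Rightarrow> 'a :: linorder"
  assumes periodic: "\<And>i. h (i + k) = h i" and "k > 0"
  obtains m where "\<And>j. h m \<le> h j"
proof -
  have "{..<k} \<noteq> {}" using \<open>k > 0\<close> by auto
  then obtain m where "is_arg_min h (\<lambda>j. j \<in> {..<k}) m"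
    using ex_is_arg_min_if_finite by blast
  then have min: "\<forall>j\<in>{..<k}. h m \<le> h j" unfolding is_arg_min_linorder by simp
  have "h m \<le> h j" for j
    using min[rule_format, of "j mod k"] \<open>k > 0\<close> periodic_mod[of h k, OF periodic] by simp
  then show ?thesis using that by blast
qed

locale square_cycle =
  fixes n :: nat and r x y :: "nat \<Rightarrow> real" and k :: nat and v :: "nat \<Rightarrow> nat"
  assumes packing: "homothetic_packing n r x y"
    and length_ge_3: "k \<ge> 3"
    and periodic: "\<And>i. v (i + k) = v i"
    and distinct: "\<And>i d. 0 < d \<Longrightarrow> d < k \<Longrightarrow> v (i + d) \<noteq> v i"
    and x_edges: "\<And>i. x_edge n r x y (v i) (v (Suc i))"
    and zigzag: "\<And>i. \<not> (x (v i) < x (v (Suc i)) \<and> x (v (Suc i)) < x (v (Suc (Suc i)))) \<and>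
                      \<not> (x (v (Suc (Suc i))) < x (v (Suc i)) \<and> x (v (Suc i)) < x (v i))"
begin

lemma in_range: "v i \<in> {1..n}"
  using x_edges[of i] unfolding x_edge_def contact_edge_def by blast

lemma radius_pos: "r (v i) > 0"
  using packing in_range unfolding homothetic_packing_def by blast

lemma y_overlap: "\<bar>y (v i) - y (v (Suc i))\<bar> \<le> r (v i) + r (v (Suc i))"
  using x_edges[of i] unfolding x_edge_def by simp

lemma common_line:
  obtains s L where "s = 1 \<or> s = -1" and "\<And>i. x (v i) + s * (-1) ^ i * r (v i) = L"
proof
  have touch: "\<bar>x (v (Suc i)) - x (v i)\<bar> = r (v i) + r (v (Suc i))" for i
    using x_edges[of i] unfolding x_edge_def by (simp add: abs_minus_commute)
  show "sgn (x (v 1) - x (v 0)) = 1 \<or> sgn (x (v 1) - x (v 0)) = -1"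
    using touch[of 0] radius_pos[of 0] radius_pos[of 1] by (auto simp: sgn_if)
  show "x (v i) + sgn (x (v 1) - x (v 0)) * (-1) ^ i * r (v i) =
      x (v 0) + sgn (x (v 1) - x (v 0)) * r (v 0)" for i
    using zigzag_common_line[of "\<lambda>i. r (v i)" "\<lambda>i. x (v i)", OF radius_pos touch zigzag] .
qed

lemma even_length: "even k"
proof -
  obtain s L where s: "s = 1 \<or> s = -1" and line: "\<And>i. x (v i) + s * (-1) ^ i * r (v i) = L"
    using common_line by blast
  have "x (v 0) + s * (-1) ^ k * r (v 0) = x (v 0) + s * r (v 0)"
    using line[of k] line[of 0] periodic[of 0] by simp
  then have "(-1 :: real) ^ k = 1" using s radius_pos[of 0] by auto
  then show ?thesis by (simp add: minus_one_power_iff split: if_splits)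
qed

lemma same_side_separated:
  assumes "even d" "0 < d" "d < k"
  shows "\<bar>y (v i) - y (v (i + d))\<bar> \<ge> r (v i) + r (v (i + d))"
proof -
  obtain s L where s: "s = 1 \<or> s = -1" and line: "\<And>i. x (v i) + s * (-1) ^ i * r (v i) = L"
    using common_line by blast
  have "(-1 :: real) ^ (i + d) = (-1) ^ i" using \<open>even d\<close> by (simp add: power_add)
  then have aligned: "x (v (i + d)) + s * (-1) ^ i * r (v (i + d)) = x (v i) + s * (-1) ^ i * r (v i)"
    using line[of i] line[of "i + d"] by simp
  have "s * (-1) ^ i = 1 \<or> s * (-1) ^ i = -1"
    using s by (auto simp: minus_one_power_iff)
  from packing_aligned_edges_separated[OF packing in_range in_range distinct[OF \<open>0 < d\<close> \<open>d < k\<close>]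
      this aligned]
  show ?thesis by (simp add: abs_minus_commute add.commute)
qed

lemma lowest_top_window:
  obtains B where "\<And>j. y (v (B + 3)) + r (v (B + 3)) \<le> y (v j) + r (v j)"
proof -
  obtain m where "\<And>j. y (v m) + r (v m) \<le> y (v j) + r (v j)"
    using periodic_has_minimum[of "\<lambda>i. y (v i) + r (v i)" k] periodic length_ge_3 by force
  moreover have "v (m + (k - 3) + 3) = v m" using periodic[of m] length_ge_3 by simp
  ultimately show ?thesis using that by metis
qed

lemma length_eq_4:
  assumes "weak_generic n r" and "n \<ge> 6"
  shows "k = 4"
proof (rule ccontr)
  assume "k \<noteq> 4"
  then have "k \<ge> 6" using even_length length_ge_3 by presburger
  obtain B where lowest: "\<And>j. y (v (B + 3)) + r (v (B + 3)) \<le> y (v j) + r (v j)"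
    using lowest_top_window by blast
  have "r (v (B + 1)) = r (v (B + 4)) \<or> r (v (B + 2)) = r (v (B + 5))"
  proof (rule lowest_top_equal_radii[where b = "\<lambda>j. y (v (B + j))" and \<rho> = "\<lambda>j. r (v (B + j))"])
    show "\<bar>y (v (B + j)) - y (v (B + (j + 1)))\<bar> \<le> r (v (B + j)) + r (v (B + (j + 1)))" for j
      using y_overlap[of "B + j"] by simp
    show "\<bar>y (v (B + j)) - y (v (B + (j + 2)))\<bar> \<ge> r (v (B + j)) + r (v (B + (j + 2)))"
      and "\<bar>y (v (B + j)) - y (v (B + (j + 4)))\<bar> \<ge> r (v (B + j)) + r (v (B + (j + 4)))" for j
      using same_side_separated[of 2 "B + j"] same_side_separated[of 4 "B + j"] \<open>k \<ge> 6\<close>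
      by (simp_all add: add.assoc)
  qed (use radius_pos lowest in auto)
  moreover have "v (B + 1) \<noteq> v (B + 4)" "v (B + 2) \<noteq> v (B + 5)"
    using distinct[of 3 "B + 1"] distinct[of 3 "B + 2"] \<open>k \<ge> 6\<close>
    by (simp_all add: add.assoc add.commute)
  ultimately show False
    using weak_generic_radii_distinct[OF assms in_range in_range] by blast
qed

lemma share_corner_if_length_4:
  assumes "k = 4"
  shows "share_corner r x y (v ` {..<k})"
proof -
  obtain B where lowest: "\<And>j. y (v (B + 3)) + r (v (B + 3)) \<le> y (v j) + r (v j)"
    using lowest_top_window by blast
  define u where "u = y (v (B + 3)) + r (v (B + 3))"
  obtain a where "a \<in> {1, 2}"
    and meet: "\<forall>j\<in>{a..a + 3}. y (v (B + j)) + r (v (B + j)) = u \<or> y (v (B + j)) - r (v (B + j)) = u"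
  proof (rule bexE[OF lowest_top_corner[where b = "\<lambda>j. y (v (B + j))" and \<rho> = "\<lambda>j. r (v (B + j))"]])
    show "\<bar>y (v (B + j)) - y (v (B + (j + 1)))\<bar> \<le> r (v (B + j)) + r (v (B + (j + 1)))" for j
      using y_overlap[of "B + j"] by simp
    show "\<bar>y (v (B + j)) - y (v (B + (j + 2)))\<bar> \<ge> r (v (B + j)) + r (v (B + (j + 2)))" for j
      using same_side_separated[of 2 "B + j"] assms by (simp add: add.assoc)
  qed (use radius_pos lowest u_def in auto)
  obtain s L where s: "s = 1 \<or> s = -1" and line: "\<And>i. x (v i) + s * (-1) ^ i * r (v i) = L"
    using common_line by blast
  have "is_corner r x y (v i) (L, u)" if "i \<in> {B + a..<B + a + k}" for i
  proof -
    have "s * (-1) ^ i \<in> {-1, 1}" using s by (auto simp: minus_one_power_iff)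
    moreover have "i - B \<in> {a..a + 3}" and "B + (i - B) = i" using that assms by auto
    then have "y (v i) + 1 * r (v i) = u \<or> y (v i) + (-1) * r (v i) = u"
      using meet by fastforce
    ultimately show ?thesis unfolding is_corner_def using line[of i] by force
  qed
  moreover have "v ` {B + a..<B + a + k} = v ` {..<k}"
    using periodic_image_window[of v k, OF periodic] length_ge_3 by simp
  ultimately show ?thesis unfolding share_corner_def by (metis imageE)
qed

end

lemma Suc_mod_pred_mod: "0 < (k::nat) \<Longrightarrow> (Suc i mod k + k - 1) mod k = i mod k"
  by (metis add_Suc_shift diff_Suc_1 gr0_implies_Suc mod_add_left_eq mod_add_self2 nat_arith.suc1)

lemma square_cycle_of_list:
  assumes packing: "homothetic_packing n r x y"
    and cycle: "is_cycle n (x_edge n r x y) c"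
    and zigzag: "\<forall>i < length c.
           (let k = length c; a = c ! ((i + k - 1) mod k); b = c ! i; d = c ! ((i + 1) mod k) in
             \<not> (x a < x b \<and> x b < x d) \<and> \<not> (x d < x b \<and> x b < x a))"
  shows "square_cycle n r x y (length c) (\<lambda>i. c ! (i mod length c))"
proof unfold_locales
  let ?k = "length c"
  have k: "?k \<ge> 3" and "distinct c"
    and edges: "\<forall>i<?k. x_edge n r x y (c ! i) (c ! ((i + 1) mod ?k))"
    using cycle unfolding is_cycle_def by auto
  then have k0: "0 < ?k" by linarith
  show "homothetic_packing n r x y" by (fact packing)
  show "?k \<ge> 3" by (fact k)
  show "c ! ((i + ?k) mod ?k) = c ! (i mod ?k)" for i by simp
  show "c ! ((i + d) mod ?k) \<noteq> c ! (i mod ?k)" if "0 < d" "d < ?k" for i d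
  proof
    assume "c ! ((i + d) mod ?k) = c ! (i mod ?k)"
    then have "(i + d) mod ?k = i mod ?k" using \<open>distinct c\<close> k0 by (simp add: nth_eq_iff_index_eq)
    then have "?k dvd d" using mod_eq_dvd_iff_nat[of i "i + d" ?k] by simp
    then show False using that by (auto dest: dvd_imp_le)
  qed
  show "x_edge n r x y (c ! (i mod ?k)) (c ! (Suc i mod ?k))" for i
    using edges[rule_format, of "i mod ?k"] k0 by (simp add: mod_Suc_eq)
  show "\<not> (x (c ! (i mod ?k)) < x (c ! (Suc i mod ?k)) \<and>
         x (c ! (Suc i mod ?k)) < x (c ! (Suc (Suc i) mod ?k))) \<and>
      \<not> (x (c ! (Suc (Suc i) mod ?k)) < x (c ! (Suc i mod ?k)) \<and>
         x (c ! (Suc i mod ?k)) < x (c ! (i mod ?k)))" for i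
    using zigzag[rule_format, of "Suc i mod ?k"] Suc_mod_pred_mod[of ?k i] k0
    by (simp add: Let_def mod_Suc_eq)
qed

theorem lemma16:
  fixes n :: nat and r x y :: "nat \<Rightarrow> real" and c :: "nat list"
  assumes "n \<ge> 6"
    and "homothetic_packing n r x y"
    and "weak_generic n r"
    and "is_cycle n (x_edge n r x y) c"
    and "\<forall>i < length c.
           (let k = length c; a = c ! ((i + k - 1) mod k); b = c ! i; d = c ! ((i + 1) mod k) in
             \<not> (x a < x b \<and> x b < x d) \<and> \<not> (x d < x b \<and> x b < x a))"
  shows "length c = 4 \<and> share_corner r x y (set c)"
proof -
  interpret square_cycle n r x y "length c" "\<lambda>i. c ! (i mod length c)"
    using square_cycle_of_list assms(2,4,5) .
  have "set c = (\<lambda>i. c ! (i mod length c)) ` {..<length c}"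
    by (auto simp: set_conv_nth)
  then show ?thesis using length_eq_4 share_corner_if_length_4 assms(1,3) by simp
qed

end
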